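(* In the univariate contact-tracing model (described in the context), if $\alpha=\beta>0$, then for every $T\in\mathbb{N}$, every probability distribution $D$ on $\{0,1,2,\dots\}$ and every $p_T\in(0,1]$, every policy is optimal; that is, from any initial frontier, all policies achieve the same expected total benefit.
   Context: Univariate model. Fix $T\in\mathbb{N}$, a probability distribution $D$ on $\{0,1,2,\dots\}$, constants $p_T\in(0,1]$, $\alpha\ge 0$, and a discount parameter $\beta>0$. Every node has a recency $h\in\{0,1,\dots,T\}$. Each node (index case or child of an infected node) of recency $h$ is infected independently with probability $p(h)=p_T e^{-\alpha(T-h)}$. If a node of recency $h$ is infected, then for each $j\in\{0,\dots,h-1\}$ it has $Z_j\sim D$ children of recency $j$, all counts independent across $j$ and across nodes and independent of infection statuses. Contact tracing: at step $t=0$ the frontier is a given finite multiset of index cases with known recencies. At each step $t=0,1,2,\dots$ while the frontier is nonempty, the tracer selects one frontier node and queries it, removing it from the frontier. The query reveals its infection status; if it is infected and has recency $h$, benefit $e^{-\beta(h+t)}$ is collected and its children (with their recencies) are added to the frontier; otherwise benefit $0$ is collected and nothing is added. A policy is a (possibly history-dependent) rule choosing at each step which frontier node to query. A policy is optimal if for every initial frontier it maximizes the expected total collected benefit over all policies. *)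

theory Defs
  imports "HOL-Probability.Probability"
begin

text \<open>Nodes are represented by their recency (a nat).
A frontier is a list of recencies (positions identify nodes). An observation of a query is
None (not infected) or Some zs, where zs ! j = Z_j is the number of children of recency j
(j < h, length zs = h).\<close>

definition inf_prob :: "nat \<Rightarrow> real \<Rightarrow> real \<Rightarrow> nat \<Rightarrow> real" where
  "inf_prob T pT \<alpha> h = pT * exp (- \<alpha> * (real T - real h))"

fun child_counts :: "nat pmf \<Rightarrow> nat \<Rightarrow> nat list pmf" where
  "child_counts D 0 = return_pmf []"
| "child_counts D (Suc h) = bind_pmf (child_counts D h) (\<lambda>xs. map_pmf (\<lambda>z. xs @ [z]) D)"

definition query_outcome :: "nat \<Rightarrow> nat pmf \<Rightarrow> real \<Rightarrow> real \<Rightarrow> nat \<Rightarrow> nat list option pmf" where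
  "query_outcome T D pT \<alpha> h =
     bind_pmf (bernoulli_pmf (inf_prob T pT \<alpha> h))
       (\<lambda>b. if b then map_pmf Some (child_counts D h) else return_pmf None)"

definition children :: "nat list \<Rightarrow> nat list" where
  "children zs = concat (map (\<lambda>j. replicate (zs ! j) j) [0..<length zs])"

definition next_frontier :: "nat list \<Rightarrow> nat \<Rightarrow> nat list option \<Rightarrow> nat list" where
  "next_frontier fr i obs =
     take i fr @ drop (Suc i) fr @ (case obs of None \<Rightarrow> [] | Some zs \<Rightarrow> children zs)"

text \<open>A history step records the frontier at that time, the queried index and the observation.\<close>

type_synonym step = "nat list \<times> nat \<times> nat list option"
type_synonym policy = "step list \<Rightarrow> nat list \<Rightarrow> nat"

definition valid_policy :: "policy \<Rightarrow> bool" where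
  "valid_policy pol \<longleftrightarrow> (\<forall>past fr. fr \<noteq> [] \<longrightarrow> pol past fr < length fr)"

text \<open>Expected benefit collected during the next n steps, given the past (whose length is
the current step t) and the current frontier.\<close>

fun exp_benefit :: "nat \<Rightarrow> nat pmf \<Rightarrow> real \<Rightarrow> real \<Rightarrow> real \<Rightarrow> policy \<Rightarrow> nat \<Rightarrow> step list
                     \<Rightarrow> nat list \<Rightarrow> ennreal" where
  "exp_benefit T D pT \<alpha> \<beta> pol 0 past fr = 0"
| "exp_benefit T D pT \<alpha> \<beta> pol (Suc n) past fr =
     (if fr = [] then 0 else
      (let i = pol past fr; h = fr ! i in
        \<integral>\<^sup>+ obs. ((case obs of None \<Rightarrow> 0
                    | Some _ \<Rightarrow> ennreal (exp (- \<beta> * (real h + real (length past)))))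
                 + exp_benefit T D pT \<alpha> \<beta> pol n (past @ [(fr, i, obs)]) (next_frontier fr i obs))
          \<partial>measure_pmf (query_outcome T D pT \<alpha> h)))"

definition total_benefit :: "nat \<Rightarrow> nat pmf \<Rightarrow> real \<Rightarrow> real \<Rightarrow> real \<Rightarrow> policy \<Rightarrow> nat list \<Rightarrow> ennreal" where
  "total_benefit T D pT \<alpha> \<beta> pol fr = (SUP n. exp_benefit T D pT \<alpha> \<beta> pol n [] fr)"

definition optimal_policy :: "nat \<Rightarrow> nat pmf \<Rightarrow> real \<Rightarrow> real \<Rightarrow> real \<Rightarrow> policy \<Rightarrow> bool" where
  "optimal_policy T D pT \<alpha> \<beta> pol \<longleftrightarrow> valid_policy pol \<and>
     (\<forall>fr. (\<forall>h\<in>set fr. h \<le> T) \<longrightarrow>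
        (\<forall>pol'. valid_policy pol' \<longrightarrow> total_benefit T D pT \<alpha> \<beta> pol' fr \<le> total_benefit T D pT \<alpha> \<beta> pol fr))"

end

theory Submission
  imports Defs
begin

text \<open>When \<open>\<alpha> = \<beta>\<close>, querying a node of recency \<open>h\<close> at step \<open>t\<close> earns in expectation
  \<open>p(h) exp(-\<beta>(h + t)) = p\<^sub>T exp(-\<beta>(T + t))\<close>, whatever \<open>h\<close> is. So the benefit of a
  policy only depends on the times at which the frontier is nonempty, and the expected benefit
  of every policy equals that of querying the frontier as a queue. The queue value depends
  only on the multiset of the frontier: two consecutive queries are independent, so they may
  be exchanged (Fubini), and an induction on the horizon moves any node to the front.\<close>

definition revealed :: "nat list option \<Rightarrow> nat list" where
  "revealed obs = (case obs of None \<Rightarrow> [] | Some zs \<Rightarrow> children zs)"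

fun queue_value :: "('a \<Rightarrow> 'a list pmf) \<Rightarrow> (nat \<Rightarrow> ennreal) \<Rightarrow> nat \<Rightarrow> nat \<Rightarrow> 'a list \<Rightarrow> ennreal" where
  "queue_value K c 0 k xs = 0"
| "queue_value K c (Suc n) k [] = 0"
| "queue_value K c (Suc n) k (x # xs) =
     c k + (\<integral>\<^sup>+ ys. queue_value K c n (Suc k) (xs @ ys) \<partial>measure_pmf (K x))"

lemma nn_integral_pmf_commute:
  fixes f :: "'a \<Rightarrow> 'b \<Rightarrow> ennreal"
  shows "(\<integral>\<^sup>+ a. \<integral>\<^sup>+ b. f a b \<partial>measure_pmf B \<partial>measure_pmf A) =
         (\<integral>\<^sup>+ b. \<integral>\<^sup>+ a. f a b \<partial>measure_pmf A \<partial>measure_pmf B)"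
proof -
  have "(\<integral>\<^sup>+ a. \<integral>\<^sup>+ b. f a b \<partial>measure_pmf B \<partial>measure_pmf A) = (\<integral>\<^sup>+ x. f (fst x) (snd x) \<partial>pair_pmf A B)"
    by (simp add: nn_integral_pair_pmf')
  also have "\<dots> = (\<integral>\<^sup>+ x. f (snd x) (fst x) \<partial>pair_pmf B A)"
    by (subst pair_commute_pmf) (simp add: case_prod_unfold)
  also have "\<dots> = (\<integral>\<^sup>+ b. \<integral>\<^sup>+ a. f a b \<partial>measure_pmf A \<partial>measure_pmf B)"
    by (simp add: nn_integral_pair_pmf')
  finally show ?thesis .
qed

lemma queue_value_Suc_Suc:
  "queue_value K c (Suc (Suc n)) k (x # y # xs) =
     c k + c (Suc k) +
     (\<integral>\<^sup>+ a. \<integral>\<^sup>+ b. queue_value K c n (Suc (Suc k)) (xs @ a @ b) \<partial>measure_pmf (K y) \<partial>measure_pmf (K x))"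
  by (simp add: nn_integral_add measure_pmf.emeasure_space_1 add.assoc)

lemma queue_value_mset:
  "mset xs = mset ys \<Longrightarrow> queue_value K c n k xs = queue_value K c n k ys"
proof (induction n arbitrary: k xs ys rule: less_induct)
  case (less n)
  show ?case
  proof (cases n)
    case 0
    then show ?thesis by simp
  next
    case n: (Suc m)
    have front: "queue_value K c n k' (x # xs') = queue_value K c n k' (x # ys')"
      if "mset xs' = mset ys'" for k' x xs' ys'
    proof -
      have "queue_value K c m (Suc k') (xs' @ zs) = queue_value K c m (Suc k') (ys' @ zs)" for zs
        using less.IH[of m] that n by simp
      then show ?thesis
        using n by simp
    qed
    have swap: "queue_value K c n k' (x # y # s) = queue_value K c n k' (y # x # s)" for k' x y s
    proof (cases m)
      case 0
      then show ?thesis using n by simp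
    next
      case m: (Suc m')
      have "queue_value K c m' (Suc (Suc k')) (s @ a @ b) =
            queue_value K c m' (Suc (Suc k')) (s @ b @ a)" for a b
        using less.IH[of m'] n m by (simp add: union_ac)
      then show ?thesis
        unfolding n m queue_value_Suc_Suc
        by (subst nn_integral_pmf_commute) (simp add: add_ac)
    qed
    show ?thesis
    proof (cases xs)
      case Nil
      with less.prems show ?thesis by simp
    next
      case xs: (Cons x xs')
      with less.prems obtain y ys' where ys: "ys = y # ys'"
        by (cases ys) auto
      show ?thesis
      proof (cases "x = y")
        case True
        with less.prems xs ys have "mset xs' = mset ys'"
          by simp
        with xs ys True show ?thesis
          using front by blast
      next
        case False
        define s where "s = remove1 y xs'"
        have "y \<in> set xs'"
          using mset_eq_setD[OF less.prems] xs ys False by auto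
        then have xs': "mset xs' = mset (y # s)"
          by (simp add: s_def)
        then have ys': "mset ys' = mset (x # s)"
          using less.prems xs ys by (simp add: add_mset_commute)
        have "queue_value K c n k xs = queue_value K c n k (x # y # s)"
          using front[OF xs'] xs by simp
        also have "\<dots> = queue_value K c n k (y # x # s)"
          by (rule swap)
        also have "\<dots> = queue_value K c n k ys"
          using front[OF ys'] ys by simp
        finally show ?thesis .
      qed
    qed
  qed
qed

lemma inf_prob_le_1:
  assumes "0 \<le> \<alpha>" "pT \<le> 1" "h \<le> T"
  shows "inf_prob T pT \<alpha> h \<le> 1"
proof -
  have "exp (- \<alpha> * (real T - real h)) \<le> 1"
    using assms by simp
  from mult_mono[OF assms(2) this] show ?thesis
    by (simp add: inf_prob_def)
qed

lemma inf_prob_mult_discount: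
  "inf_prob T pT \<beta> h * exp (- \<beta> * (real h + t)) = pT * exp (- \<beta> * (real T + t))"
  unfolding inf_prob_def by (simp add: mult_exp_exp algebra_simps)

text \<open>\<^const>\<open>bernoulli_pmf\<close> clips its parameter to \<open>[0, 1]\<close>; the hypotheses keep
  \<^const>\<open>inf_prob\<close> inside that range.\<close>

lemma expected_query_reward:
  assumes "0 \<le> \<alpha>" "0 \<le> pT" "pT \<le> 1" "h \<le> T" "0 \<le> r"
  shows "(\<integral>\<^sup>+ obs. (case obs of None \<Rightarrow> 0 | Some _ \<Rightarrow> ennreal r)
            \<partial>measure_pmf (query_outcome T D pT \<alpha> h)) = ennreal (inf_prob T pT \<alpha> h * r)"
proof -
  have "0 \<le> inf_prob T pT \<alpha> h"
    using assms by (simp add: inf_prob_def)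
  moreover have "inf_prob T pT \<alpha> h \<le> 1"
    using assms by (simp add: inf_prob_le_1)
  ultimately show ?thesis
    unfolding query_outcome_def
    by (simp add: measure_pmf.emeasure_space_1 ennreal_mult assms(5) mult.commute)
qed

lemma length_child_counts: "zs \<in> set_pmf (child_counts D h) \<Longrightarrow> length zs = h"
  by (induction h arbitrary: zs) auto

lemma set_children_less: "x \<in> set (children zs) \<Longrightarrow> x < length zs"
  unfolding children_def by auto

lemma set_revealed_less:
  "obs \<in> set_pmf (query_outcome T D pT \<alpha> h) \<Longrightarrow> x \<in> set (revealed obs) \<Longrightarrow> x < h"
  unfolding query_outcome_def revealed_def
  by (auto split: if_splits option.splits dest: length_child_counts set_children_less)

lemma next_frontier_eq:
  "next_frontier fr i obs = take i fr @ drop (Suc i) fr @ revealed obs"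
  by (simp add: next_frontier_def revealed_def)

lemma next_frontier_le:
  assumes "\<forall>x\<in>set fr. x \<le> T" "i < length fr"
    and "obs \<in> set_pmf (query_outcome T D pT \<alpha> (fr ! i))"
  shows "\<forall>x\<in>set (next_frontier fr i obs). x \<le> T"
proof -
  have "fr ! i \<le> T"
    using assms(1,2) by simp
  then show ?thesis
    using assms(1) set_revealed_less[OF assms(3)]
    by (auto simp: next_frontier_eq dest!: in_set_takeD in_set_dropD less_imp_le_nat
        intro: order_trans)
qed

lemma mset_nth_Cons_remove:
  "i < length xs \<Longrightarrow> mset xs = mset (xs ! i # take i xs @ drop (Suc i) xs)"
  by (subst id_take_nth_drop) simp_all

lemma exp_benefit_eq_queue_value:
  assumes "0 \<le> \<beta>" "0 \<le> pT" "pT \<le> 1" "valid_policy pol" "\<forall>h\<in>set fr. h \<le> T"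
  shows "exp_benefit T D pT \<beta> \<beta> pol n past fr =
    queue_value (\<lambda>h. map_pmf revealed (query_outcome T D pT \<beta> h))
      (\<lambda>k. ennreal (pT * exp (- \<beta> * (real T + real k)))) n (length past) fr"
  using assms(5)
proof (induction n arbitrary: past fr)
  case 0
  then show ?case by simp
next
  case (Suc n)
  let ?Q = "\<lambda>h. measure_pmf (query_outcome T D pT \<beta> h)"
  let ?V = "queue_value (\<lambda>h. map_pmf revealed (query_outcome T D pT \<beta> h))
              (\<lambda>k. ennreal (pT * exp (- \<beta> * (real T + real k))))"
  let ?k = "length past"
  show ?case
  proof (cases "fr = []")
    case True
    then show ?thesis by simp
  next
    case False
    define i where "i = pol past fr"
    define h where "h = fr ! i"
    define rest where "rest = take i fr @ drop (Suc i) fr"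
    have i: "i < length fr"
      using assms(4) False by (simp add: i_def valid_policy_def)
    have "h \<le> T"
      using Suc.prems i by (simp add: h_def)
    have IH: "exp_benefit T D pT \<beta> \<beta> pol n (past @ [(fr, i, obs)]) (next_frontier fr i obs) =
              ?V n (Suc ?k) (rest @ revealed obs)"
      if "obs \<in> set_pmf (query_outcome T D pT \<beta> h)" for obs
      using Suc.IH[OF next_frontier_le[OF Suc.prems i that[unfolded h_def]]]
      by (simp add: next_frontier_eq rest_def)
    have "exp_benefit T D pT \<beta> \<beta> pol (Suc n) past fr =
      (\<integral>\<^sup>+ obs. (case obs of None \<Rightarrow> 0 | Some _ \<Rightarrow> ennreal (exp (- \<beta> * (real h + real ?k))))
         + exp_benefit T D pT \<beta> \<beta> pol n (past @ [(fr, i, obs)]) (next_frontier fr i obs) \<partial>?Q h)"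
      unfolding h_def i_def using False by (simp add: Let_def)
    also have "\<dots> =
      (\<integral>\<^sup>+ obs. (case obs of None \<Rightarrow> 0 | Some _ \<Rightarrow> ennreal (exp (- \<beta> * (real h + real ?k))))
         + ?V n (Suc ?k) (rest @ revealed obs) \<partial>?Q h)"
      by (intro nn_integral_cong_AE) (simp add: AE_measure_pmf_iff IH)
    also have "\<dots> = ennreal (inf_prob T pT \<beta> h * exp (- \<beta> * (real h + real ?k)))
         + (\<integral>\<^sup>+ obs. ?V n (Suc ?k) (rest @ revealed obs) \<partial>?Q h)"
      using assms \<open>h \<le> T\<close> by (simp add: nn_integral_add expected_query_reward)
    also have "\<dots> = ?V (Suc n) ?k (h # rest)"
      by (simp only: inf_prob_mult_discount queue_value.simps nn_integral_map_pmf)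
    also have "\<dots> = ?V (Suc n) ?k fr"
      by (rule queue_value_mset) (use mset_nth_Cons_remove[OF i] in \<open>simp add: h_def rest_def\<close>)
    finally show ?thesis .
  qed
qed

lemma total_benefit_eq_queue_value:
  assumes "0 \<le> \<beta>" "0 \<le> pT" "pT \<le> 1" "valid_policy pol" "\<forall>h\<in>set fr. h \<le> T"
  shows "total_benefit T D pT \<beta> \<beta> pol fr =
    (SUP n. queue_value (\<lambda>h. map_pmf revealed (query_outcome T D pT \<beta> h))
      (\<lambda>k. ennreal (pT * exp (- \<beta> * (real T + real k)))) n 0 fr)"
  using exp_benefit_eq_queue_value[OF assms, where past = "[]"]
  by (simp add: total_benefit_def)

theorem theorem6p4:
  fixes T :: nat and D :: "nat pmf" and pT \<alpha> \<beta> :: real and pol :: policy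
  assumes "\<alpha> = \<beta>" and "\<beta> > 0" and "0 < pT" and "pT \<le> 1"
    and "valid_policy pol"
  shows "optimal_policy T D pT \<alpha> \<beta> pol"
  unfolding optimal_policy_def \<open>\<alpha> = \<beta>\<close>
proof (intro conjI allI impI)
  fix fr pol'
  assume "\<forall>h\<in>set fr. h \<le> T" and "valid_policy pol'"
  with assms show "total_benefit T D pT \<beta> \<beta> pol' fr \<le> total_benefit T D pT \<beta> \<beta> pol fr"
    by (simp add: total_benefit_eq_queue_value)
qed (rule assms(5))

end
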